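(* Let $r \ge 3$ and $b \in \{0,1\}$. For $n \ge 1$ let $g^{b\text{-}\mathrm{ff}}_r(n)$ be the maximum cardinality of a family $\mathcal{F} \subseteq \{0,1\}^n$ containing no $b$-focal family of size $r$. Then for every $n$, $$g^{b\text{-}\mathrm{ff}}_r(n) \le (r-1)\sum_{k=0}^n \frac{\binom{n}{\lceil \frac{(r-2)k}{r-1}\rceil}}{\binom{k}{\lceil \frac{(r-2)k}{r-1}\rceil}},$$ and this sum equals $\left(1 + \frac{r-2}{(r-1)^{\frac{r-1}{r-2}}} + o(1)\right)^n$ as $n \to \infty$.
   Context: For $b \in \{0,1\}$, a family $x^{(0)}, x^{(1)}, \dots, x^{(r-1)}$ of $r$ distinct vectors in $\{0,1\}^n$ is $b$-focal with focus $x^{(0)}$ if for every coordinate $i \in [n]$ with $x^{(0)}_i = b$, at least $r-2$ of the $r-1$ entries $x^{(1)}_i, \dots, x^{(r-1)}_i$ are equal to $b$. A family contains a $b$-focal family of size $r$ if some $r$ distinct members, with some choice of focus among them, form a $b$-focal family. *)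

theory Defs
  imports Complex_Main
begin

text \<open>Vectors in the cube {0,1}^n are represented as boolean lists of length n;
  the bit b in {0,1} is represented by a boolean (True = 1, False = 0).\<close>

definition cube :: "nat \<Rightarrow> bool list set" where
  "cube n = {xs. length xs = n}"

definition is_focal :: "bool \<Rightarrow> nat \<Rightarrow> bool list \<Rightarrow> bool list list \<Rightarrow> bool" where
  "is_focal b n x0 xs \<longleftrightarrow>
     distinct (x0 # xs) \<and>
     (\<forall>i<n. x0 ! i = b \<longrightarrow>
        length xs - 1 \<le> card {j. j < length xs \<and> (xs ! j) ! i = b})"

definition contains_focal :: "bool \<Rightarrow> nat \<Rightarrow> nat \<Rightarrow> bool list set \<Rightarrow> bool" where
  "contains_focal b r n F \<longleftrightarrow>
     (\<exists>x0 xs. x0 \<in> F \<and> set xs \<subseteq> F \<and> length xs = r - 1 \<and> is_focal b n x0 xs)"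

definition g_ff :: "bool \<Rightarrow> nat \<Rightarrow> nat \<Rightarrow> nat" where
  "g_ff b r n = Max {card F | F. F \<subseteq> cube n \<and> \<not> contains_focal b r n F}"

definition focal_sum :: "nat \<Rightarrow> nat \<Rightarrow> real" where
  "focal_sum r n = (\<Sum>k = 0..n.
     let c = nat \<lceil>real (r - 2) * real k / real (r - 1)\<rceil>
     in real (n choose c) / real (k choose c))"

end

theory Submission
  imports Defs "HOL-Combinatorics.Permutations" "HOL-Real_Asymp.Real_Asymp"
begin

text \<open>Write \<open>q = r - 1\<close> and \<open>c\<^sub>k = k - k div q\<close>, the ceiling in \<open>focal_sum\<close>.

  Split the family by the weight \<open>k = |supp b x|\<close>. Take \<open>x\<close> of weight \<open>k\<close> and disjoint
  \<open>(k div q)\<close>-subsets \<open>P\<^sub>1, \<dots>, P\<^sub>q\<close> of \<open>supp b x\<close>, and let \<open>d\<^sub>j\<close> count the members whose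
  support contains \<open>supp b x - P\<^sub>j\<close>. If \<open>\<Sum>\<^sub>j 1 / d\<^sub>j < 1\<close>, distinct representatives \<open>y\<^sub>j \<noteq> x\<close>
  can be chosen greedily, and they form a focal family with focus \<open>x\<close>, since each coordinate of
  \<open>supp b x\<close> lies in at most one \<open>P\<^sub>j\<close>. Averaging over the permutations of \<open>supp b x\<close> gives
  \<open>\<Sum>\<^sub>A 1 / d(A) \<ge> C(k, c\<^sub>k) / q\<close> over the \<open>c\<^sub>k\<close>-subsets \<open>A\<close> of \<open>supp b x\<close>; as every \<open>c\<^sub>k\<close>-set of
  coordinates contributes at most \<open>1\<close> in total over the layer, the layer has at most
  \<open>q C(n, c\<^sub>k) / C(k, c\<^sub>k)\<close> members.

  For the growth, choose \<open>x\<close> with \<open>x\<^bsup>q-1\<^esup> q\<^sup>q = (q - 1)\<^bsup>q-1\<^esup>\<close>. Then \<open>C(k, c\<^sub>k) x\<^bsup>c\<^sub>k\<^esup>\<close> is within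
  polynomial factors of \<open>1\<close> (from below because the central term of \<open>(1 + (q - 1))\<^bsup>qm\<^esup>\<close> is its
  largest), so the terms of \<open>focal_sum\<close> are within polynomial factors of \<open>C(n, c\<^sub>k) x\<^bsup>c\<^sub>k\<^esup>\<close>, and
  the largest term of \<open>(1 + x)\<^sup>n\<close> is of this form.\<close>

section \<open>Distinct representatives and averaging over permutations\<close>

lemma exists_inj_choice_if_sum_inverse_card_less_1:
  fixes Y :: "'j \<Rightarrow> 'a set"
  assumes "finite J" and fin: "\<And>j. j \<in> J \<Longrightarrow> finite (Y j)"
    and "(\<Sum>j\<in>J. 1 / real (card (Y j) + 1)) < 1"
  shows "\<exists>h. inj_on h J \<and> (\<forall>j\<in>J. h j \<in> Y j)"
  using assms(1,3)
proof (induction J rule: finite_remove_induct)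
  case (remove A)
  obtain j0 where j0: "j0 \<in> A" "Max ((\<lambda>j. card (Y j)) ` A) = card (Y j0)"
    using obtains_MAX[OF remove.hyps(1,2)] by metis
  have max: "card (Y j) \<le> card (Y j0)" if "j \<in> A" for j
    using j0(2) remove.hyps(1) that by (metis Max_ge finite_imageI image_eqI)
  \<comment> \<open>The largest set \<open>Y j0\<close> is served last: it has at least \<open>card A\<close> elements, since
    otherwise every term of the sum would be at least \<open>1 / card A\<close>.\<close>
  have large: "card A \<le> card (Y j0)"
  proof (rule ccontr)
    assume "\<not> ?thesis"
    then have "1 / real (card A) \<le> 1 / real (card (Y j) + 1)" if "j \<in> A" for j
      using max[OF that] by (intro divide_left_mono) auto
    then have "(\<Sum>j\<in>A. 1 / real (card A)) \<le> (\<Sum>j\<in>A. 1 / real (card (Y j) + 1))"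
      by (rule sum_mono)
    with remove.prems remove.hyps(1,2) show False by simp
  qed
  have "(\<Sum>j\<in>A - {j0}. 1 / real (card (Y j) + 1)) \<le> (\<Sum>j\<in>A. 1 / real (card (Y j) + 1))"
    using remove.hyps(1) by (intro sum_mono2) auto
  then obtain h where h: "inj_on h (A - {j0})" "\<forall>j\<in>A - {j0}. h j \<in> Y j"
    using remove.IH[OF j0(1)] remove.prems by fastforce
  have "card (h ` (A - {j0})) < card (Y j0)"
    using card_image_le[of "A - {j0}" h] card_Diff1_less[OF remove.hyps(1) j0(1)] large remove.hyps(1)
    by simp
  then obtain y where y: "y \<in> Y j0" "y \<notin> h ` (A - {j0})"
    using card_mono[of "h ` (A - {j0})" "Y j0"] remove.hyps(1) by (meson finite_Diff finite_imageI not_le subsetI)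
  have "inj_on (h(j0 := y)) A"
    using h(1) y(2) j0(1) unfolding inj_on_def by (metis Diff_iff fun_upd_apply image_eqI singletonD)
  moreover have "\<forall>j\<in>A. (h(j0 := y)) j \<in> Y j" using h(2) y(1) by auto
  ultimately show ?case by blast
qed simp

lemma exists_permutes_image_eq:
  assumes S: "finite S" and "B \<subseteq> S" "P \<subseteq> S" "card B = card P"
  shows "\<exists>\<tau>. \<tau> permutes S \<and> \<tau> ` B = P"
proof -
  have "finite B" "finite P" using S assms(2,3) finite_subset by auto
  then obtain g where g: "bij_betw g B P" using finite_same_card_bij assms(4) by blast
  have "card (S - B) = card (S - P)" using assms \<open>finite B\<close> \<open>finite P\<close> by (simp add: card_Diff_subset)
  then obtain h where h: "bij_betw h (S - B) (S - P)" using finite_same_card_bij S by blast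
  define \<tau> where "\<tau> x = (if x \<in> B then g x else if x \<in> S then h x else x)" for x
  have gB: "bij_betw \<tau> B P" using g by (rule bij_betw_cong[THEN iffD1, rotated]) (simp add: \<tau>_def)
  have hB: "bij_betw \<tau> (S - B) (S - P)" using h by (rule bij_betw_cong[THEN iffD1, rotated]) (simp add: \<tau>_def)
  have "bij_betw \<tau> (B \<union> (S - B)) (P \<union> (S - P))" by (rule bij_betw_combine[OF gB hB]) auto
  then have "bij_betw \<tau> S S" using assms(2,3) by (simp add: Un_absorb1)
  then have "\<tau> permutes S" by (rule bij_imp_permutes) (use assms(2) in \<open>auto simp: \<tau>_def\<close>)
  moreover have "\<tau> ` B = P" using gB by (simp add: bij_betw_def)
  ultimately show ?thesis by blast
qed

lemma card_permutes_image_eq: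
  assumes S: "finite S" and "B \<subseteq> S" "P \<subseteq> S" "card P = card B"
  shows "card {\<sigma>. \<sigma> permutes S \<and> \<sigma> ` B = P} = card {\<sigma>. \<sigma> permutes S \<and> \<sigma> ` B = B}"
proof -
  obtain \<tau> where \<tau>: "\<tau> permutes S" "\<tau> ` B = P"
    using exists_permutes_image_eq[OF S assms(2,3) assms(4)[symmetric]] by blast
  have inv: "inv \<tau> ` P = B"
    unfolding \<tau>(2)[symmetric] by (rule image_inv_f_f[OF permutes_inj[OF \<tau>(1)]])
  have "bij_betw (\<lambda>\<sigma>. \<tau> \<circ> \<sigma>) {\<sigma>. \<sigma> permutes S \<and> \<sigma> ` B = B} {\<sigma>. \<sigma> permutes S \<and> \<sigma> ` B = P}"
  proof (rule bij_betw_byWitness[where f' = "\<lambda>\<sigma>. inv \<tau> \<circ> \<sigma>"])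
    show "\<forall>\<sigma>\<in>{\<sigma>. \<sigma> permutes S \<and> \<sigma> ` B = B}. inv \<tau> \<circ> (\<tau> \<circ> \<sigma>) = \<sigma>"
      using permutes_inverses(2)[OF \<tau>(1)] by (simp add: fun_eq_iff)
    show "\<forall>\<sigma>\<in>{\<sigma>. \<sigma> permutes S \<and> \<sigma> ` B = P}. \<tau> \<circ> (inv \<tau> \<circ> \<sigma>) = \<sigma>"
      using permutes_inverses(1)[OF \<tau>(1)] by (simp add: fun_eq_iff)
    show "(\<lambda>\<sigma>. \<tau> \<circ> \<sigma>) ` {\<sigma>. \<sigma> permutes S \<and> \<sigma> ` B = B} \<subseteq> {\<sigma>. \<sigma> permutes S \<and> \<sigma> ` B = P}"
    proof
      fix \<rho> assume "\<rho> \<in> (\<lambda>\<sigma>. \<tau> \<circ> \<sigma>) ` {\<sigma>. \<sigma> permutes S \<and> \<sigma> ` B = B}"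
      then obtain \<sigma> where \<sigma>: "\<sigma> permutes S" "\<sigma> ` B = B" and \<rho>: "\<rho> = \<tau> \<circ> \<sigma>" by blast
      have "\<rho> ` B = P" unfolding \<rho> by (simp only: image_comp[symmetric] \<sigma>(2) \<tau>(2))
      then show "\<rho> \<in> {\<sigma>. \<sigma> permutes S \<and> \<sigma> ` B = P}" using permutes_compose[OF \<sigma>(1) \<tau>(1)] \<rho> by blast
    qed
    show "(\<lambda>\<sigma>. inv \<tau> \<circ> \<sigma>) ` {\<sigma>. \<sigma> permutes S \<and> \<sigma> ` B = P} \<subseteq> {\<sigma>. \<sigma> permutes S \<and> \<sigma> ` B = B}"
    proof
      fix \<rho> assume "\<rho> \<in> (\<lambda>\<sigma>. inv \<tau> \<circ> \<sigma>) ` {\<sigma>. \<sigma> permutes S \<and> \<sigma> ` B = P}"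
      then obtain \<sigma> where \<sigma>: "\<sigma> permutes S" "\<sigma> ` B = P" and \<rho>: "\<rho> = inv \<tau> \<circ> \<sigma>" by blast
      have "\<rho> ` B = B" unfolding \<rho> by (simp only: image_comp[symmetric] \<sigma>(2) inv)
      then show "\<rho> \<in> {\<sigma>. \<sigma> permutes S \<and> \<sigma> ` B = B}"
        using permutes_compose[OF \<sigma>(1) permutes_inv[OF \<tau>(1)]] \<rho> by blast
    qed
  qed
  then show ?thesis by (simp add: bij_betw_same_card)
qed

lemma sum_permutes_image:
  fixes g :: "'a set \<Rightarrow> real"
  assumes S: "finite S" and B: "B \<subseteq> S"
  shows "(\<Sum>\<sigma>\<in>{\<sigma>. \<sigma> permutes S}. g (\<sigma> ` B))
    = real (card {\<sigma>. \<sigma> permutes S \<and> \<sigma> ` B = B}) * (\<Sum>P\<in>{P. P \<subseteq> S \<and> card P = card B}. g P)"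
proof -
  define Sub where "Sub = {P. P \<subseteq> S \<and> card P = card B}"
  have "finite Sub" unfolding Sub_def using S by simp
  have image: "\<sigma> ` B \<in> Sub" if "\<sigma> permutes S" for \<sigma>
    using that B permutes_image[OF that] permutes_inj[OF that]
    by (auto simp: Sub_def card_image inj_on_subset)
  have "(\<Sum>\<sigma>\<in>{\<sigma>. \<sigma> permutes S}. g (\<sigma> ` B))
      = (\<Sum>P\<in>Sub. \<Sum>\<sigma>\<in>{\<sigma>\<in>{\<sigma>. \<sigma> permutes S}. \<sigma> ` B = P}. g (\<sigma> ` B))"
    by (rule sum.group[symmetric]) (use S \<open>finite Sub\<close> image finite_permutations in auto)
  also have "\<dots> = (\<Sum>P\<in>Sub. real (card {\<sigma>. \<sigma> permutes S \<and> \<sigma> ` B = B}) * g P)"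
  proof (rule sum.cong[OF refl])
    fix P assume "P \<in> Sub"
    then have "card {\<sigma>. \<sigma> permutes S \<and> \<sigma> ` B = P} = card {\<sigma>. \<sigma> permutes S \<and> \<sigma> ` B = B}"
      unfolding Sub_def using S B by (intro card_permutes_image_eq) auto
    then show "(\<Sum>\<sigma>\<in>{\<sigma>\<in>{\<sigma>. \<sigma> permutes S}. \<sigma> ` B = P}. g (\<sigma> ` B))
        = real (card {\<sigma>. \<sigma> permutes S \<and> \<sigma> ` B = B}) * g P"
      by simp
  qed
  finally show ?thesis unfolding Sub_def by (simp add: sum_distrib_left)
qed

lemma exists_disjoint_subsets:
  assumes "finite S" "q * m \<le> card S"
  shows "\<exists>P. (\<forall>j<q. P j \<subseteq> S \<and> card (P j) = m) \<and> (\<forall>i<q. \<forall>j<q. i \<noteq> j \<longrightarrow> P i \<inter> P j = {})"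
  using assms
proof (induction q arbitrary: S)
  case (Suc q)
  obtain P0 where P0: "P0 \<subseteq> S" "card P0 = m"
    using obtain_subset_with_card_n[of m S] Suc.prems(2) by auto
  have "q * m \<le> card (S - P0)"
    using Suc.prems P0 by (simp add: card_Diff_subset finite_subset)
  then obtain P where P: "\<forall>j<q. P j \<subseteq> S - P0 \<and> card (P j) = m"
    "\<forall>i<q. \<forall>j<q. i \<noteq> j \<longrightarrow> P i \<inter> P j = {}"
    using Suc.IH[of "S - P0"] Suc.prems(1) by blast
  have "\<forall>j<Suc q. (P(q := P0)) j \<subseteq> S \<and> card ((P(q := P0)) j) = m"
    using P(1) P0 by (auto simp: less_Suc_eq)
  moreover have "\<forall>i<Suc q. \<forall>j<Suc q. i \<noteq> j \<longrightarrow> (P(q := P0)) i \<inter> (P(q := P0)) j = {}"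
    using P by (auto simp: less_Suc_eq)
  ultimately show ?case by blast
qed simp

text \<open>Proof: average over all permutations of \<open>S\<close> the images of one fixed family of \<open>q\<close>
  disjoint \<open>m\<close>-sets; the image of a single \<open>m\<close>-set is uniformly distributed.\<close>

lemma binomial_le_sum_subsets_if_disjoint_sum_ge_1:
  fixes f :: "'a set \<Rightarrow> real"
  assumes S: "finite S" and q: "q > 0" and qm: "q * m \<le> card S"
    and disjoint_sum: "\<And>P. \<forall>j<q. P j \<subseteq> S \<and> card (P j) = m \<Longrightarrow>
      \<forall>i<q. \<forall>j<q. i \<noteq> j \<longrightarrow> P i \<inter> P j = {} \<Longrightarrow> 1 \<le> (\<Sum>j<q. f (P j))"
  shows "real (card S choose m) \<le> real q * (\<Sum>P\<in>{P. P \<subseteq> S \<and> card P = m}. f P)"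
proof -
  define Perms where "Perms = {\<sigma>. \<sigma> permutes S}"
  define C where "C = real (card S choose m)"
  define \<Sigma> where "\<Sigma> = (\<Sum>P\<in>{P. P \<subseteq> S \<and> card P = m}. f P)"
  obtain B where B: "\<forall>j<q. B j \<subseteq> S \<and> card (B j) = m"
    and B_disj: "\<forall>i<q. \<forall>j<q. i \<noteq> j \<longrightarrow> B i \<inter> B j = {}"
    using exists_disjoint_subsets[OF S qm] by blast
  have "m \<le> q * m" using q by simp
  then have C: "C > 0" unfolding C_def using order.trans[OF _ qm] by simp
  have sum_B: "(\<Sum>\<sigma>\<in>Perms. g (\<sigma> ` B j)) = real (card Perms) / C * (\<Sum>P\<in>{P. P \<subseteq> S \<and> card P = m}. g P)"
    if "j < q" for j and g :: "'a set \<Rightarrow> real"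
  proof -
    define N where "N = real (card {\<sigma>. \<sigma> permutes S \<and> \<sigma> ` B j = B j})"
    have sum: "(\<Sum>\<sigma>\<in>Perms. h (\<sigma> ` B j)) = N * (\<Sum>P\<in>{P. P \<subseteq> S \<and> card P = m}. h P)"
      for h :: "'a set \<Rightarrow> real"
      using sum_permutes_image[OF S, of "B j" h] B that unfolding Perms_def N_def by simp
    from sum[of "\<lambda>_. 1"] have "real (card Perms) = N * C"
      unfolding C_def using n_subsets[OF S, of m] by simp
    with sum[of g] C show ?thesis by simp
  qed
  have "real (card Perms) = (\<Sum>\<sigma>\<in>Perms. 1)" by simp
  also have "\<dots> \<le> (\<Sum>\<sigma>\<in>Perms. \<Sum>j<q. f (\<sigma> ` B j))"
  proof (rule sum_mono, rule disjoint_sum)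
    fix \<sigma> assume "\<sigma> \<in> Perms"
    then have \<sigma>: "\<sigma> permutes S" unfolding Perms_def by simp
    show "\<forall>j<q. \<sigma> ` B j \<subseteq> S \<and> card (\<sigma> ` B j) = m"
    proof (intro allI impI conjI)
      fix j assume "j < q"
      then show "\<sigma> ` B j \<subseteq> S" using B permutes_image[OF \<sigma>] by blast
      show "card (\<sigma> ` B j) = m"
        using B \<open>j < q\<close> card_image[OF inj_on_subset[OF permutes_inj[OF \<sigma>] subset_UNIV]] by simp
    qed
    show "\<forall>i<q. \<forall>j<q. i \<noteq> j \<longrightarrow> \<sigma> ` B i \<inter> \<sigma> ` B j = {}"
      using B_disj permutes_inj[OF \<sigma>] by (simp add: image_Int[symmetric])
  qed
  also have "\<dots> = (\<Sum>j<q. \<Sum>\<sigma>\<in>Perms. f (\<sigma> ` B j))" by (rule sum.swap)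
  also have "\<dots> = (\<Sum>j<q. real (card Perms) / C * \<Sigma>)"
    unfolding \<Sigma>_def by (intro sum.cong refl sum_B) simp
  also have "\<dots> = real (card Perms) * (real q * \<Sigma> / C)" by simp
  finally have "real (card Perms) * 1 \<le> real (card Perms) * (real q * \<Sigma> / C)" by simp
  moreover have "real (card Perms) > 0" using S by (simp add: Perms_def card_permutations)
  ultimately have "1 \<le> real q * \<Sigma> / C" by (simp only: mult_le_cancel_left_pos)
  then show ?thesis using C unfolding C_def \<Sigma>_def by (simp add: field_simps)
qed

lemma sum_subsets_inverse_count_le:
  fixes S :: "'x \<Rightarrow> 'a set"
  assumes G: "finite G" and U: "finite U" and sub: "\<And>x. x \<in> G \<Longrightarrow> S x \<subseteq> U"
  shows "(\<Sum>x\<in>G. \<Sum>A\<in>{A. A \<subseteq> S x \<and> card A = c}. 1 / real (card {y\<in>G. A \<subseteq> S y}))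
    \<le> real (card U choose c)"
proof -
  define Sub where "Sub = {A. A \<subseteq> U \<and> card A = c}"
  define d where "d A = real (card {y\<in>G. A \<subseteq> S y})" for A
  have "finite Sub" unfolding Sub_def using U by simp
  have "(\<Sum>x\<in>G. \<Sum>A\<in>{A. A \<subseteq> S x \<and> card A = c}. 1 / d A)
      = (\<Sum>x\<in>G. \<Sum>A\<in>Sub. if A \<subseteq> S x then 1 / d A else 0)"
  proof (rule sum.cong[OF refl])
    fix x assume "x \<in> G"
    then have "{A \<in> Sub. A \<subseteq> S x} = {A. A \<subseteq> S x \<and> card A = c}"
      unfolding Sub_def using sub by auto
    then show "(\<Sum>A\<in>{A. A \<subseteq> S x \<and> card A = c}. 1 / d A) = (\<Sum>A\<in>Sub. if A \<subseteq> S x then 1 / d A else 0)"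
      using sum.inter_filter[OF \<open>finite Sub\<close>, of "\<lambda>A. 1 / d A" "\<lambda>A. A \<subseteq> S x"] by simp
  qed
  also have "\<dots> = (\<Sum>A\<in>Sub. \<Sum>x\<in>G. if A \<subseteq> S x then 1 / d A else 0)" by (rule sum.swap)
  also have "\<dots> \<le> (\<Sum>A\<in>Sub. 1)"
  proof (rule sum_mono)
    fix A
    have "(\<Sum>x\<in>G. if A \<subseteq> S x then 1 / d A else 0) = d A * (1 / d A)"
      using sum.inter_filter[OF G, of "\<lambda>_. 1 / d A" "\<lambda>x. A \<subseteq> S x"] by (simp add: d_def)
    then show "(\<Sum>x\<in>G. if A \<subseteq> S x then 1 / d A else 0) \<le> 1" by (cases "d A = 0") auto
  qed
  also have "\<dots> = real (card U choose c)" unfolding Sub_def using n_subsets[OF U] by simp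
  finally show ?thesis unfolding d_def .
qed

section \<open>Families without focal subfamilies\<close>

definition supp :: "bool \<Rightarrow> bool list \<Rightarrow> nat set" where
  "supp b x = {i. i < length x \<and> x ! i = b}"

lemma finite_supp [simp]: "finite (supp b x)"
  unfolding supp_def by simp

lemma supp_subset: "x \<in> cube n \<Longrightarrow> supp b x \<subseteq> {..<n}"
  unfolding supp_def cube_def by auto

lemma finite_cube: "finite (cube n)"
  using finite_lists_length_eq[of "UNIV :: bool set" n] unfolding cube_def by simp

lemma contains_focal_mono: "F \<subseteq> F' \<Longrightarrow> contains_focal b r n F \<Longrightarrow> contains_focal b r n F'"
  unfolding contains_focal_def by blast

text \<open>A coordinate of \<open>supp b x\<close> lies in at most one of the disjoint sets \<open>P j\<close>, so at most one
  \<open>y j\<close> differs from \<open>b\<close> there.\<close>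

lemma contains_focalI:
  assumes x: "x \<in> G" and G: "G \<subseteq> cube n"
    and disj: "\<forall>i<q. \<forall>j<q. i \<noteq> j \<longrightarrow> P i \<inter> P j = {}"
    and inj: "inj_on y {..<q}" and y: "\<forall>j<q. y j \<in> G - {x} \<and> supp b x - P j \<subseteq> supp b (y j)"
  shows "contains_focal b (Suc q) n G"
proof -
  define ys where "ys = map y [0..<q]"
  have set_ys: "set ys = y ` {..<q}" unfolding ys_def by (simp add: atLeast0LessThan)
  have "distinct (x # ys)"
    using inj y unfolding ys_def by (auto simp: distinct_map atLeast0LessThan)
  moreover have "length ys - 1 \<le> card {j. j < length ys \<and> ys ! j ! i = b}"
    if i: "i < n" "x ! i = b" for i
  proof -
    define good where "good = {j. j < q \<and> y j ! i = b}"
    define bad where "bad = {j. j < q \<and> y j ! i \<noteq> b}"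
    have "i \<in> supp b x" using i x G unfolding supp_def cube_def by auto
    then have "bad \<subseteq> {j. j < q \<and> i \<in> P j}"
      using y unfolding bad_def supp_def by blast
    moreover have "card {j. j < q \<and> i \<in> P j} \<le> 1"
      using disj by (auto simp: card_le_Suc0_iff_eq)
    ultimately have "card bad \<le> 1"
      using card_mono[of "{j. j < q \<and> i \<in> P j}" bad] by simp
    moreover have "card (good \<union> bad) = card good + card bad"
      unfolding good_def bad_def by (rule card_Un_disjoint) auto
    moreover have "good \<union> bad = {..<q}" unfolding good_def bad_def by auto
    moreover have "{j. j < length ys \<and> ys ! j ! i = b} = good" unfolding ys_def good_def by auto
    ultimately show ?thesis unfolding ys_def by simp
  qed
  ultimately have "is_focal b n x ys" unfolding is_focal_def by blast
  moreover have "set ys \<subseteq> G" unfolding set_ys using y by auto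
  ultimately show ?thesis
    unfolding contains_focal_def using x by (intro exI[of _ x] exI[of _ ys]) (simp add: ys_def)
qed

text \<open>The counts include \<open>x\<close> itself; if the sum were below \<open>1\<close>, the other members covering the
  sets \<open>supp b x - P j\<close> would admit a system of distinct representatives.\<close>

lemma disjoint_parts_inverse_count_ge_1:
  assumes G: "G \<subseteq> cube n" and no_focal: "\<not> contains_focal b (Suc q) n G" and x: "x \<in> G"
    and disj: "\<forall>i<q. \<forall>j<q. i \<noteq> j \<longrightarrow> P i \<inter> P j = {}"
  shows "1 \<le> (\<Sum>j<q. 1 / real (card {y\<in>G. supp b x - P j \<subseteq> supp b y}))"
proof (rule ccontr)
  define Y where "Y j = {y\<in>G. supp b x - P j \<subseteq> supp b y} - {x}" for j
  have fin: "finite (Y j)" for j unfolding Y_def using finite_subset[OF G finite_cube] by simp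
  have "card {y\<in>G. supp b x - P j \<subseteq> supp b y} = card (Y j) + 1" for j
  proof -
    have "x \<in> {y\<in>G. supp b x - P j \<subseteq> supp b y}" using x by auto
    moreover have "finite {y\<in>G. supp b x - P j \<subseteq> supp b y}"
      using finite_subset[OF G finite_cube] by simp
    ultimately show ?thesis unfolding Y_def using card.remove by fastforce
  qed
  moreover assume "\<not> ?thesis"
  ultimately have "(\<Sum>j\<in>{..<q}. 1 / real (card (Y j) + 1)) < 1" by simp
  then obtain y where "inj_on y {..<q}" "\<forall>j\<in>{..<q}. y j \<in> Y j"
    using exists_inj_choice_if_sum_inverse_card_less_1[of "{..<q}" Y] fin by blast
  then have "contains_focal b (Suc q) n G"
    using contains_focalI[OF x G disj] unfolding Y_def by blast
  with no_focal show False ..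
qed

lemma choose_le_sum_inverse_count:
  assumes q: "q \<ge> 1" and G: "G \<subseteq> cube n" and no_focal: "\<not> contains_focal b (Suc q) n G"
    and x: "x \<in> G" and k: "card (supp b x) = k"
  shows "real (k choose (k - k div q))
    \<le> real q * (\<Sum>A\<in>{A. A \<subseteq> supp b x \<and> card A = k - k div q}. 1 / real (card {y\<in>G. A \<subseteq> supp b y}))"
proof -
  define S where "S = supp b x"
  define m where "m = k div q"
  define f where "f P = 1 / real (card {y\<in>G. S - P \<subseteq> supp b y})" for P
  have qm: "q * m \<le> card S" unfolding S_def k m_def by simp
  have "m \<le> k" unfolding m_def by simp
  have "real (card S choose m) \<le> real q * (\<Sum>P\<in>{P. P \<subseteq> S \<and> card P = m}. f P)"
    using q qm disjoint_parts_inverse_count_ge_1[OF G no_focal x] unfolding f_def S_def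
    by (intro binomial_le_sum_subsets_if_disjoint_sum_ge_1) auto
  moreover have "card S choose m = k choose (k - m)"
    unfolding S_def k using \<open>m \<le> k\<close> by (rule binomial_symmetric)
  moreover have "bij_betw (\<lambda>P. S - P) {P. P \<subseteq> S \<and> card P = m} {A. A \<subseteq> S \<and> card A = k - m}"
    using k \<open>m \<le> k\<close> finite_supp[of b x] unfolding S_def[symmetric]
    by (intro bij_betw_byWitness[where f' = "\<lambda>A. S - A"]) (auto simp: card_Diff_subset finite_subset)
  then have "(\<Sum>P\<in>{P. P \<subseteq> S \<and> card P = m}. f P)
      = (\<Sum>A\<in>{A. A \<subseteq> S \<and> card A = k - m}. 1 / real (card {y\<in>G. A \<subseteq> supp b y}))"
    unfolding f_def by (rule sum.reindex_bij_betw)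
  ultimately show ?thesis unfolding S_def m_def by simp
qed

lemma card_layer_le:
  assumes q: "q \<ge> 1" and G: "G \<subseteq> cube n" and no_focal: "\<not> contains_focal b (Suc q) n G"
    and weight: "\<And>x. x \<in> G \<Longrightarrow> card (supp b x) = k"
  shows "real (card G) * real (k choose (k - k div q)) \<le> real q * real (n choose (k - k div q))"
proof -
  define c where "c = k - k div q"
  have "real (card G) * real (k choose c) = (\<Sum>x\<in>G. real (k choose c))" by simp
  also have "\<dots> \<le> (\<Sum>x\<in>G. real q * (\<Sum>A\<in>{A. A \<subseteq> supp b x \<and> card A = c}. 1 / real (card {y\<in>G. A \<subseteq> supp b y})))"
    unfolding c_def using choose_le_sum_inverse_count[OF q G no_focal] weight by (intro sum_mono) auto
  also have "\<dots> = real q * (\<Sum>x\<in>G. \<Sum>A\<in>{A. A \<subseteq> supp b x \<and> card A = c}. 1 / real (card {y\<in>G. A \<subseteq> supp b y}))"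
    by (simp add: sum_distrib_left)
  also have "\<dots> \<le> real q * real (card {..<n} choose c)"
    using finite_subset[OF G finite_cube] supp_subset G
    by (intro mult_left_mono sum_subsets_inverse_count_le) auto
  finally show ?thesis unfolding c_def by simp
qed

lemma sub_div_eq: "k - k div q = (q - 1) * (k div q) + k mod q" for k q :: nat
proof (cases q)
  case (Suc p)
  then show ?thesis using div_mult_mod_eq[of k q] by (simp add: algebra_simps)
qed simp

lemma nat_ceiling_eq_sub_div:
  assumes "q \<ge> 1"
  shows "nat \<lceil>real (q - 1) * real k / real q\<rceil> = k - k div q"
proof -
  define m where "m = k div q"
  define s where "s = k mod q"
  have k: "k = q * m + s" and "s < q" unfolding m_def s_def using assms by simp_all
  have "\<lceil>real (q - 1) * real k / real q\<rceil> = int ((q - 1) * m + s)"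
    unfolding k using assms \<open>s < q\<close> by (intro ceiling_unique) (simp_all add: field_simps of_nat_diff)
  then show ?thesis using sub_div_eq[of k q] unfolding m_def[symmetric] s_def[symmetric] by (simp only: nat_int)
qed

lemma focal_sum_Suc:
  assumes "q \<ge> 1"
  shows "focal_sum (Suc q) n
    = (\<Sum>k = 0..n. real (n choose (k - k div q)) / real (k choose (k - k div q)))"
  unfolding focal_sum_def Let_def using nat_ceiling_eq_sub_div[OF assms] by simp

lemma g_ff_attained: "\<exists>F. F \<subseteq> cube n \<and> \<not> contains_focal b r n F \<and> card F = g_ff b r n"
proof -
  define Cards where "Cards = {card F | F. F \<subseteq> cube n \<and> \<not> contains_focal b r n F}"
  have "Cards \<subseteq> {..card (cube n)}" unfolding Cards_def using finite_cube by (auto intro: card_mono)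
  then have "finite Cards" by (rule finite_subset) simp
  moreover have "card {} \<in> Cards"
    unfolding Cards_def contains_focal_def by (intro CollectI exI[of _ "{}"]) simp
  ultimately have "g_ff b r n \<in> Cards" unfolding g_ff_def Cards_def[symmetric] by (intro Max_in) auto
  then show ?thesis unfolding Cards_def by auto
qed

lemma g_ff_le_focal_sum:
  assumes q: "q \<ge> 1"
  shows "real (g_ff b (Suc q) n) \<le> real q * focal_sum (Suc q) n"
proof -
  obtain F where F: "F \<subseteq> cube n" "\<not> contains_focal b (Suc q) n F" "card F = g_ff b (Suc q) n"
    using g_ff_attained by blast
  define layer where "layer k = {x\<in>F. card (supp b x) = k}" for k
  have "finite F" using finite_subset[OF F(1) finite_cube] .
  have weights: "(\<lambda>x. card (supp b x)) ` F \<subseteq> {0..n}"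
    using F(1) supp_subset by (fastforce dest: card_mono[OF finite_lessThan])
  have "real (card F) = (\<Sum>k=0..n. real (card (layer k)))"
    using sum.group[OF \<open>finite F\<close> _ weights, of "\<lambda>_. 1 :: real"] unfolding layer_def by simp
  also have "\<dots> \<le> (\<Sum>k=0..n. real q * (real (n choose (k - k div q)) / real (k choose (k - k div q))))"
  proof (rule sum_mono)
    fix k
    have "layer k \<subseteq> F" unfolding layer_def by auto
    then have "\<not> contains_focal b (Suc q) n (layer k)" using F(2) contains_focal_mono by blast
    then have "real (card (layer k)) * real (k choose (k - k div q)) \<le> real q * real (n choose (k - k div q))"
      using F(1) \<open>layer k \<subseteq> F\<close> q by (intro card_layer_le) (auto simp: layer_def)
    then show "real (card (layer k)) \<le> real q * (real (n choose (k - k div q)) / real (k choose (k - k div q)))"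
      by (simp add: field_simps)
  qed
  also have "\<dots> = real q * focal_sum (Suc q) n" unfolding focal_sum_Suc[OF q] by (simp add: sum_distrib_left)
  finally show ?thesis using F(3) by simp
qed

section \<open>Exponential growth of the focal sum\<close>

lemma Suc_times_binomial_Suc_eq: "Suc i * (n choose Suc i) = (n - i) * (n choose i)"
  by (metis binomial_absorb_comp binomial_absorption)

lemma binomial_add_le: "n choose (i + s) \<le> n ^ s * (n choose i)"
proof (induction s)
  case (Suc s)
  have "n choose (i + Suc s) \<le> Suc (i + s) * (n choose Suc (i + s))" by simp
  also have "\<dots> \<le> n * (n choose (i + s))" unfolding Suc_times_binomial_Suc_eq by simp
  also have "\<dots> \<le> n * (n ^ s * (n choose i))" using Suc by simp
  finally show ?case by (simp add: mult.assoc)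
qed simp

text \<open>The ratio of consecutive terms of \<open>q ^ N = (\<Sum>i\<le>N. (N choose i) * (q - 1) ^ (N - i))\<close>
  is \<open>(N - i) / ((i + 1) * (q - 1))\<close>, which is at least \<open>1\<close> exactly while \<open>i < N div q\<close>.\<close>

lemma binomial_weight_le_mode:
  fixes q m i :: nat
  assumes q: "q \<ge> 2" and i: "i \<le> q * m"
  shows "(q * m choose i) * (q - 1) ^ (q * m - i) \<le> (q * m choose m) * (q - 1) ^ (q * m - m)"
proof -
  define N where "N = q * m"
  define a where "a i = (N choose i) * (q - 1) ^ (N - i)" for i
  have ratio: "a (Suc i) * (Suc i * (q - 1)) = a i * (N - i)" if "i < N" for i
  proof -
    have "(q - 1) ^ (N - Suc i) * (q - 1) = (q - 1) ^ (N - i)"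
      using that by (metis Suc_diff_Suc power_Suc2)
    then show ?thesis
      unfolding a_def using Suc_times_binomial_Suc_eq[of i N] by (metis mult.assoc mult.commute)
  qed
  have pos: "Suc i * (q - 1) > 0" for i using q by simp
  have "m \<le> N" unfolding N_def using q by simp
  have up: "a i \<le> a (Suc i)" if "i < m" for i
  proof -
    have "Suc i * q \<le> m * q" using that by (intro mult_le_mono1) simp
    then have "Suc i * (q - 1) \<le> N - i"
      unfolding N_def by (simp add: diff_mult_distrib2 mult.commute)
    moreover have "i < N" using that \<open>m \<le> N\<close> by simp
    ultimately have "a i * (Suc i * (q - 1)) \<le> a (Suc i) * (Suc i * (q - 1))"
      using ratio[of i] by (metis mult_le_mono2)
    then show ?thesis using pos[of i] mult_le_cancel2 by blast
  qed
  have down: "a (Suc i) \<le> a i" if "m \<le> i" "i < N" for i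
  proof -
    have "q * m \<le> q * i" using that by simp
    then have "N - i \<le> q * i - i" unfolding N_def by linarith
    also have "\<dots> = i * (q - 1)" by (simp add: diff_mult_distrib2 mult.commute)
    also have "\<dots> \<le> Suc i * (q - 1)" by simp
    finally have "N - i \<le> Suc i * (q - 1)" .
    then have "a (Suc i) * (Suc i * (q - 1)) \<le> a i * (Suc i * (q - 1))"
      using ratio[OF that(2)] by (metis mult_le_mono2)
    then show ?thesis using pos[of i] mult_le_cancel2 by blast
  qed
  have "a i \<le> a m"
  proof (cases "i \<le> m")
    case True
    show ?thesis by (rule lift_Suc_mono_le_ivl[of "{..<m}", OF _ True]) (auto intro: up)
  next
    case False
    then have "m \<le> i" by simp
    then show ?thesis
      by (rule lift_Suc_antimono_le_ivl[of "{m..<N}", rotated]) (use i in \<open>auto intro: down simp: N_def\<close>)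
  qed
  then show ?thesis unfolding a_def N_def .
qed

lemma power_le_central_binomial_weight:
  assumes "q \<ge> 2"
  shows "q ^ (q * m) \<le> (q * m + 1) * (q * m choose m) * (q - 1) ^ ((q - 1) * m)"
proof -
  define N where "N = q * m"
  have "q ^ N = (\<Sum>i\<le>N. (N choose i) * (q - 1) ^ (N - i))"
    using binomial_ring[of 1 "q - 1" N] assms by simp
  also have "\<dots> \<le> (\<Sum>i\<le>N. (N choose m) * (q - 1) ^ (N - m))"
    using binomial_weight_le_mode[OF assms] unfolding N_def by (intro sum_mono) simp
  also have "\<dots> = (N + 1) * ((N choose m) * (q - 1) ^ (N - m))" by simp
  also have "N - m = (q - 1) * m" unfolding N_def by (simp add: diff_mult_distrib)
  finally show ?thesis unfolding N_def by (simp only: mult.assoc)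
qed

lemma binomial_weight_le_power:
  assumes "m \<le> k" "q \<ge> 1"
  shows "(k choose m) * (q - 1) ^ (k - m) \<le> q ^ k"
proof -
  have "(k choose m) * (q - 1) ^ (k - m) \<le> (\<Sum>i\<le>k. (k choose i) * (q - 1) ^ (k - i))"
    using assms(1) by (intro member_le_sum) auto
  also have "\<dots> = q ^ k" using binomial_ring[of 1 "q - 1" k] assms(2) by simp
  finally show ?thesis .
qed

definition growth_weight :: "nat \<Rightarrow> real" where
  "growth_weight q = real (q - 1) / real q powr (real q / real (q - 1))"

lemma growth_weight_pos: "q \<ge> 2 \<Longrightarrow> growth_weight q > 0"
  unfolding growth_weight_def by auto

lemma growth_weight_power:
  assumes q: "q \<ge> 2"
  shows "growth_weight q ^ ((q - 1) * m) * real q ^ (q * m) = real (q - 1) ^ ((q - 1) * m)"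
proof -
  have "(real q powr (real q / real (q - 1))) ^ (q - 1) = real q powr real q"
    using q by (simp add: powr_realpow[symmetric] powr_powr)
  also have "\<dots> = real q ^ q" using q by (simp add: powr_realpow)
  finally have "growth_weight q ^ (q - 1) * real q ^ q = real (q - 1) ^ (q - 1)"
    unfolding growth_weight_def power_divide using q by simp
  then have "(growth_weight q ^ (q - 1) * real q ^ q) ^ m = real (q - 1) ^ ((q - 1) * m)"
    by (simp only: power_mult)
  then show ?thesis by (simp only: power_mult power_mult_distrib)
qed

lemma growth_weight_le_1:
  assumes q: "q \<ge> 2"
  shows "growth_weight q \<le> 1"
proof -
  have "growth_weight q ^ (q - 1) * real q ^ q = real (q - 1) ^ (q - 1)"
    using growth_weight_power[OF q, of 1] by simp
  also have "\<dots> \<le> real q ^ q"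
    using q by (intro order.trans[OF power_mono power_increasing]) auto
  finally have "growth_weight q ^ (q - 1) \<le> 1" using q by simp
  then show ?thesis using q growth_weight_pos[OF q] by (simp add: power_le_one_iff)
qed

lemma central_binomial_growth_weight_ge_1:
  assumes q: "q \<ge> 2"
  shows "1 \<le> real (q * m + 1) * real (q * m choose m) * growth_weight q ^ ((q - 1) * m)"
proof -
  have "real q ^ (q * m) \<le> real (q * m + 1) * real (q * m choose m) * real (q - 1) ^ ((q - 1) * m)"
    using power_le_central_binomial_weight[OF q, of m] by (metis of_nat_le_iff of_nat_mult of_nat_power)
  also have "\<dots> = real (q * m + 1) * real (q * m choose m) * growth_weight q ^ ((q - 1) * m) * real q ^ (q * m)"
    using growth_weight_power[OF q, of m] by (simp add: mult.assoc)
  finally show ?thesis using q by simp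
qed

lemma binomial_growth_weight_le:
  assumes q: "q \<ge> 2"
  shows "real (k choose (k - k div q)) * growth_weight q ^ (k - k div q) \<le> real q ^ q"
proof -
  define m where "m = k div q"
  define s where "s = k mod q"
  define x where "x = growth_weight q"
  have k: "k = q * m + s" and "s < q" unfolding m_def s_def using q by simp_all
  have mk: "m \<le> k" unfolding m_def by simp
  have c: "k - m = (q - 1) * m + s" unfolding m_def s_def by (rule sub_div_eq)
  have x: "0 < x" "x \<le> 1" unfolding x_def using growth_weight_pos growth_weight_le_1 q by auto
  have "(k choose (k - m)) * (q - 1) ^ (k - m) \<le> q ^ k"
    unfolding binomial_symmetric[OF mk, symmetric] using mk q by (intro binomial_weight_le_power) auto
  then have "real (k choose (k - m)) * real (q - 1) ^ (k - m) \<le> real q ^ k"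
    unfolding of_nat_mult[symmetric] of_nat_power[symmetric] of_nat_le_iff .
  then have "real (k choose (k - m)) * x ^ (k - m) * real (q - 1) ^ (k - m) \<le> x ^ (k - m) * real q ^ k"
    using mult_left_mono[of _ _ "x ^ (k - m)"] x by (simp add: mult_ac)
  also have "\<dots> \<le> x ^ ((q - 1) * m) * real q ^ k"
    using x c by (intro mult_right_mono power_decreasing) auto
  also have "\<dots> = x ^ ((q - 1) * m) * real q ^ (q * m) * real q ^ s"
    unfolding k power_add by simp
  also have "\<dots> = real (q - 1) ^ ((q - 1) * m) * real q ^ s"
    unfolding x_def growth_weight_power[OF q] ..
  also have "\<dots> \<le> real (q - 1) ^ (k - m) * real q ^ q"
    using q c \<open>s < q\<close> by (intro mult_mono power_increasing) auto
  finally show ?thesis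
    using q unfolding x_def m_def by (simp add: mult.commute)
qed

lemma binomial_power_le_power:
  fixes x :: real
  assumes "x \<ge> 0" "j \<le> n"
  shows "real (n choose j) * x ^ j \<le> (1 + x) ^ n"
proof -
  have "real (n choose j) * x ^ j = real (n choose j) * x ^ j * 1 ^ (n - j)" by simp
  also have "\<dots> \<le> (\<Sum>i\<le>n. real (n choose i) * x ^ i * 1 ^ (n - i))"
    using assms by (intro member_le_sum) auto
  also have "\<dots> = (1 + x) ^ n" using binomial_ring[of x 1 n] by (simp add: add.commute)
  finally show ?thesis .
qed

lemma focal_term_le:
  assumes q: "q \<ge> 2" and kn: "k \<le> n"
  shows "real (n choose (k - k div q)) / real (k choose (k - k div q))
    \<le> real (n + 1) ^ Suc q * (1 + growth_weight q) ^ n"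
proof -
  define m where "m = k div q"
  define s where "s = k mod q"
  define x where "x = growth_weight q"
  have k: "k = q * m + s" and "s < q" unfolding m_def s_def using q by simp_all
  have c: "k - m = (q - 1) * m + s" unfolding m_def s_def by (rule sub_div_eq)
  have "m \<le> q * m" using q by simp
  have x: "0 < x" unfolding x_def using growth_weight_pos q by auto
  define B where "B = real (q * m choose m)"
  define D where "D = real (n choose ((q - 1) * m))"
  define X where "X = x ^ ((q - 1) * m)"
  have B: "B > 0" unfolding B_def using \<open>m \<le> q * m\<close> by simp
  have "k choose (k - m) = k choose m"
    using binomial_symmetric[of m k] unfolding m_def by simp
  also have "\<dots> \<ge> q * m choose m" using k by (intro binomial_right_mono) simp
  finally have "B \<le> real (k choose (k - m))" unfolding B_def by simp
  then have "real (n choose (k - m)) / real (k choose (k - m)) \<le> real (n choose (k - m)) / B"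
    using B by (intro divide_left_mono) auto
  also have "\<dots> \<le> real (n + 1) ^ q * D / B"
  proof -
    have "n choose (k - m) \<le> n ^ s * (n choose ((q - 1) * m))"
      unfolding c by (rule binomial_add_le)
    also have "\<dots> \<le> (n + 1) ^ q * (n choose ((q - 1) * m))"
      using \<open>s < q\<close> by (intro mult_right_mono order.trans[OF power_mono power_increasing]) auto
    finally have "real (n choose (k - m)) \<le> real (n + 1) ^ q * D"
      unfolding D_def by (simp only: of_nat_mult[symmetric] of_nat_power[symmetric] of_nat_le_iff)
    then show ?thesis using B by (intro divide_right_mono) auto
  qed
  also have "\<dots> \<le> real (n + 1) ^ q * D * (real (q * m + 1) * X)"
  proof -
    have "1 \<le> real (q * m + 1) * B * X"
      unfolding B_def X_def x_def by (rule central_binomial_growth_weight_ge_1[OF q])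
    then have "1 / B \<le> real (q * m + 1) * X" using B by (simp add: field_simps)
    then show ?thesis
      unfolding D_def by (simp add: divide_inverse) (intro mult_left_mono; simp)
  qed
  also have "\<dots> = real (n + 1) ^ q * real (q * m + 1) * (D * X)" by (simp add: mult_ac)
  also have "\<dots> \<le> real (n + 1) ^ q * real (n + 1) * (1 + x) ^ n"
  proof (intro mult_mono)
    show "D * X \<le> (1 + x) ^ n"
      unfolding D_def X_def using x c kn by (intro binomial_power_le_power) auto
    show "real (q * m + 1) \<le> real (n + 1)" using k kn by (intro of_nat_mono) simp
    show "0 \<le> D * X" unfolding D_def X_def using x by simp
  qed auto
  finally show ?thesis unfolding m_def x_def by (simp add: mult.commute)
qed

lemma binomial_power_antimono:
  fixes x :: real
  assumes x: "0 \<le> x" "x \<le> 1" and n: "n \<le> 2 * j" and "j \<le> i"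
  shows "real (n choose i) * x ^ i \<le> real (n choose j) * x ^ j"
proof (rule lift_Suc_antimono_le_ivl[where N = "{j..}", OF _ \<open>j \<le> i\<close>])
  fix i assume "i \<in> {j..}"
  then have "Suc i * (n choose Suc i) \<le> Suc i * (n choose i)"
    unfolding Suc_times_binomial_Suc_eq using n by (intro mult_right_mono) auto
  then have "real (n choose Suc i) \<le> real (n choose i)" by (subst (asm) mult_le_cancel1) simp
  then show "real (n choose Suc i) * x ^ Suc i \<le> real (n choose i) * x ^ i"
    using x by (intro mult_mono power_decreasing) auto
qed auto

lemma exists_sub_div_eq:
  fixes q :: nat
  assumes "q \<ge> 1" "j \<le> n - n div q"
  shows "\<exists>k\<le>n. k - k div q = j"
proof -
  have step: "\<forall>i<n. \<bar>int ((i + 1) - (i + 1) div q) - int (i - i div q)\<bar> \<le> 1"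
    using div_le_dividend le_SucI[OF div_le_dividend] by (auto simp: div_Suc of_nat_diff)
  have "int j \<le> int (n - n div q)" using assms(2) by (simp only: of_nat_le_iff)
  then have "\<exists>k\<le>n. int (k - k div q) = int j"
    by (rule nat0_intermed_int_val[where f = "\<lambda>i. int (i - i div q)", OF step, rotated]) simp
  then show ?thesis by (simp only: of_nat_eq_iff)
qed

lemma focal_sum_le:
  assumes q: "q \<ge> 2"
  shows "focal_sum (Suc q) n \<le> real (n + 1) ^ (q + 2) * (1 + growth_weight q) ^ n"
proof -
  have "focal_sum (Suc q) n \<le> (\<Sum>k = 0..n. real (n + 1) ^ Suc q * (1 + growth_weight q) ^ n)"
    unfolding focal_sum_Suc[OF order.trans[OF one_le_numeral q]]
    using focal_term_le[OF q] by (intro sum_mono) auto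
  also have "\<dots> = real (n + 1) ^ (q + 2) * (1 + growth_weight q) ^ n" by simp
  finally show ?thesis .
qed

lemma binomial_growth_weight_le_focal_sum:
  assumes q: "q \<ge> 2" and "k \<le> n"
  shows "real (n choose (k - k div q)) * growth_weight q ^ (k - k div q) \<le> real q ^ q * focal_sum (Suc q) n"
proof -
  define c where "c = k - k div q"
  have "real (k choose c) \<noteq> 0" unfolding c_def by simp
  then have "real (n choose c) * growth_weight q ^ c
      = real (n choose c) / real (k choose c) * (real (k choose c) * growth_weight q ^ c)"
    by simp
  also have "\<dots> \<le> real (n choose c) / real (k choose c) * real q ^ q"
    unfolding c_def by (intro mult_left_mono binomial_growth_weight_le q) simp
  also have "\<dots> \<le> focal_sum (Suc q) n * real q ^ q"
    unfolding focal_sum_Suc[OF order.trans[OF one_le_numeral q]] c_def using \<open>k \<le> n\<close>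
    by (intro mult_right_mono member_le_sum[where f = "\<lambda>k. real (n choose (k - k div q)) / real (k choose (k - k div q))"]) auto
  finally show ?thesis unfolding c_def by (simp add: mult.commute)
qed

text \<open>As \<open>x \<le> 1\<close>, the terms \<open>(n choose i) * x ^ i\<close> decrease beyond \<open>n div 2\<close>, so the largest one has an
  index \<open>i \<le> n - n div q\<close>, which is of the form \<open>k - k div q\<close> with \<open>k \<le> n\<close>.\<close>

lemma focal_sum_ge:
  assumes q: "q \<ge> 2"
  shows "(1 + growth_weight q) ^ n \<le> real q ^ q * real (n + 1) * focal_sum (Suc q) n"
proof -
  define x where "x = growth_weight q"
  define j where "j = n - n div q"
  have x: "0 < x" "x \<le> 1" unfolding x_def using growth_weight_pos growth_weight_le_1 q by auto
  have term_le: "real (n choose i) * x ^ i \<le> real q ^ q * focal_sum (Suc q) n" if "i \<le> n" for i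
  proof -
    have "n div q \<le> n div 2" using q by (simp add: div_le_mono2)
    then have "n \<le> 2 * j" unfolding j_def by linarith
    then have "real (n choose i) * x ^ i \<le> real (n choose min i j) * x ^ min i j"
      using binomial_power_antimono[of x n j i] x by (cases "i \<le> j") auto
    moreover obtain k where "k \<le> n" "k - k div q = min i j"
      using exists_sub_div_eq[of q "min i j" n] q unfolding j_def by auto
    ultimately show ?thesis
      using binomial_growth_weight_le_focal_sum[OF q \<open>k \<le> n\<close>] unfolding x_def by simp
  qed
  have "(1 + x) ^ n = (\<Sum>i\<le>n. real (n choose i) * x ^ i)"
    using binomial_ring[of x 1 n] by (simp add: add.commute)
  also have "\<dots> \<le> (\<Sum>i\<le>n. real q ^ q * focal_sum (Suc q) n)" by (intro sum_mono term_le) simp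
  also have "\<dots> = real q ^ q * real (n + 1) * focal_sum (Suc q) n" by simp
  finally show ?thesis unfolding x_def .
qed

lemma powr_inverse_tendsto_of_polynomial_bounds:
  fixes f :: "nat \<Rightarrow> real" and c K K' :: real
  assumes c: "c > 0" and K: "K > 0" "K' > 0"
    and lower: "\<And>n. c ^ n \<le> K * real (n + 1) ^ a * f n"
    and upper: "\<And>n. f n \<le> K' * real (n + 1) ^ a' * c ^ n"
  shows "(\<lambda>n. f n powr (1 / real n)) \<longlonglongrightarrow> c"
proof (rule tendsto_sandwich)
  define p where "p n = K * real (n + 1) ^ a" for n
  define p' where "p' n = K' * real (n + 1) ^ a'" for n
  have p: "p n > 0" "p' n > 0" for n unfolding p_def p'_def using K by simp_all
  have p_lim: "(\<lambda>n. p n powr (1 / real n)) \<longlonglongrightarrow> 1" "(\<lambda>n. p' n powr (1 / real n)) \<longlonglongrightarrow> 1"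
    unfolding p_def p'_def using K by real_asymp+
  have c_root: "(c ^ n) powr (1 / real n) = c" if "n \<ge> 1" for n
    using c that by (simp add: powr_realpow[symmetric] powr_powr)
  have f: "f n \<ge> c ^ n / p n" for n using lower[of n] p[of n] by (simp add: p_def field_simps)
  have f_nonneg: "f n \<ge> 0" for n using order.trans[OF _ f[of n]] c p[of n] by simp
  show "\<forall>\<^sub>F n in sequentially. c / p n powr (1 / real n) \<le> f n powr (1 / real n)"
  proof (rule eventually_sequentiallyI[of 1])
    fix n :: nat assume "n \<ge> 1"
    have "c / p n powr (1 / real n) = (c ^ n / p n) powr (1 / real n)"
      using c p[of n] c_root[OF \<open>n \<ge> 1\<close>] by (simp add: powr_divide)
    also have "\<dots> \<le> f n powr (1 / real n)"
      using f[of n] c p[of n] by (intro powr_mono2) auto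
    finally show "c / p n powr (1 / real n) \<le> f n powr (1 / real n)" .
  qed
  show "\<forall>\<^sub>F n in sequentially. f n powr (1 / real n) \<le> p' n powr (1 / real n) * c"
  proof (rule eventually_sequentiallyI[of 1])
    fix n :: nat assume "n \<ge> 1"
    have "f n powr (1 / real n) \<le> (p' n * c ^ n) powr (1 / real n)"
      using upper[of n] f_nonneg[of n] unfolding p'_def by (intro powr_mono2) auto
    also have "\<dots> = p' n powr (1 / real n) * c"
      using c p[of n] c_root[OF \<open>n \<ge> 1\<close>] by (simp add: powr_mult)
    finally show "f n powr (1 / real n) \<le> p' n powr (1 / real n) * c" .
  qed
  show "(\<lambda>n. c / p n powr (1 / real n)) \<longlonglongrightarrow> c" using tendsto_divide[OF tendsto_const p_lim(1)] by simp
  show "(\<lambda>n. p' n powr (1 / real n) * c) \<longlonglongrightarrow> c" using tendsto_mult[OF p_lim(2) tendsto_const] by simp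
qed

lemma focal_sum_powr_tendsto:
  assumes q: "q \<ge> 2"
  shows "(\<lambda>n. focal_sum (Suc q) n powr (1 / real n)) \<longlonglongrightarrow> 1 + growth_weight q"
proof (rule powr_inverse_tendsto_of_polynomial_bounds[where K' = 1])
  show "0 < 1 + growth_weight q" using growth_weight_pos[OF q] by simp
  show "(1 + growth_weight q) ^ n \<le> real q ^ q * real (n + 1) ^ 1 * focal_sum (Suc q) n" for n
    using focal_sum_ge[OF q] by simp
  show "focal_sum (Suc q) n \<le> 1 * real (n + 1) ^ (q + 2) * (1 + growth_weight q) ^ n" for n
    using focal_sum_le[OF q] by simp
qed (use q in simp_all)

theorem corollary5p3:
  fixes r :: nat and b :: bool
  assumes "r \<ge> 3"
  shows "(\<forall>n\<ge>1. real (g_ff b r n) \<le> real (r - 1) * focal_sum r n) \<and>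
         ((\<lambda>n. focal_sum r n powr (1 / real n)) \<longlongrightarrow>
            1 + real (r - 2) / (real (r - 1) powr (real (r - 1) / real (r - 2)))) at_top"
proof -
  define q where "q = r - 1"
  have r: "r = Suc q" and q: "q \<ge> 2" using assms unfolding q_def by auto
  have "growth_weight q = real (r - 2) / (real (r - 1) powr (real (r - 1) / real (r - 2)))"
    unfolding growth_weight_def r by simp
  then show ?thesis
    using g_ff_le_focal_sum[of q b] focal_sum_powr_tendsto[OF q] q unfolding r by simp
qed

end
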